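(* Let $B_1,\dots,B_N$ be the biconnected components of $G$. Then Condition 1 holds if and only if for each $n=1,\dots,N$ there exists an individual $v_n\in V$ who evaluates all alternatives of $B_n$, i.e. $A(B_n)\subseteq A_{v_n}$ (equivalently, $B_n\subseteq G_{v_n}$).
   Context: Let $A$ be a finite set of alternatives and $V$ a finite set of individuals, with $|A|\ge 3$ and $|V|\ge 3$. For each $v\in V$, let $A_v\subseteq A$ be the set of alternatives that $v$ evaluates, with $|A_v|\ge 2$. A graph is identified with its edge set, a set of unordered pairs $ab=\{a,b\}$ of distinct alternatives; a subgraph is a subset of the edge set. For a subgraph $H$, $A(H)$ denotes the set of alternatives appearing in some edge of $H$. Define $G_v=\{ab : a,b\in A_v,\ a\neq b\}$ and $G=\{ab: a,b\in A_v \text{ for some } v\in V,\ a\ne b\}$. A path in $G$ is a set $\{a_1a_2,a_2a_3,\dots,a_{M-1}a_M\}\subseteq G$ with $a_1,\dots,a_M$ distinct; a cycle in $G$ is a set $\{a_1a_2,\dots,a_{M-1}a_M,a_Ma_1\}\subseteq G$ with $a_1,\dots,a_M$ distinct and $M\ge 3$. A nonempty subgraph $H$ is connected if any two vertices of $A(H)$ are joined by a path in $H$. A vertex $a\in A(H)$ is an articulation vertex of $H$ if there are distinct $b,c\in A(H)\setminus\{a\}$ such that every path in $H$ from $b$ to $c$ contains $a$. A subgraph $B\subseteq G$ is biconnected if it consists of a single edge or is connected and has no articulation vertex; a biconnected component of $G$ is a nonempty maximal (under inclusion) biconnected subgraph of $G$ (isolated vertices are not components). Condition 1: for every cycle $C$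 of $G$ there exists $v\in V$ such that $A(C)\subseteq A_v$. *)

theory Defs
  imports Main
begin

text \<open>Graphs are sets of edges; an edge ab is the two-element set {a,b}.\<close>

definition G_ind :: "('v \<Rightarrow> 'a set) \<Rightarrow> 'v \<Rightarrow> 'a set set" where
  "G_ind Av v = {{a, b} | a b. a \<in> Av v \<and> b \<in> Av v \<and> a \<noteq> b}"

definition G_all :: "'v set \<Rightarrow> ('v \<Rightarrow> 'a set) \<Rightarrow> 'a set set" where
  "G_all V Av = {{a, b} | a b. a \<noteq> b \<and> (\<exists>v\<in>V. a \<in> Av v \<and> b \<in> Av v)}"

definition verts :: "'a set set \<Rightarrow> 'a set" where
  "verts H = \<Union> H"

definition path_edges :: "'a list \<Rightarrow> 'a set set" where
  "path_edges xs = {{x, y} | x y. (x, y) \<in> set (zip xs (tl xs))}"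

definition path_list_in :: "'a set set \<Rightarrow> 'a list \<Rightarrow> 'a \<Rightarrow> 'a \<Rightarrow> bool" where
  "path_list_in H xs b c \<longleftrightarrow> xs \<noteq> [] \<and> distinct xs \<and> hd xs = b \<and> last xs = c
      \<and> path_edges xs \<subseteq> H"

definition is_cycle_in :: "'a set set \<Rightarrow> 'a set set \<Rightarrow> bool" where
  "is_cycle_in H C \<longleftrightarrow> (\<exists>xs. distinct xs \<and> length xs \<ge> 3
      \<and> C = path_edges (xs @ [hd xs]) \<and> C \<subseteq> H)"

definition connected_graph :: "'a set set \<Rightarrow> bool" where
  "connected_graph H \<longleftrightarrow> H \<noteq> {} \<and>
     (\<forall>b\<in>verts H. \<forall>c\<in>verts H. \<exists>xs. path_list_in H xs b c)"

definition articulation_vertex :: "'a set set \<Rightarrow> 'a \<Rightarrow> bool" where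
  "articulation_vertex H a \<longleftrightarrow> a \<in> verts H \<and>
     (\<exists>b\<in>verts H - {a}. \<exists>c\<in>verts H - {a}. b \<noteq> c \<and>
        (\<forall>xs. path_list_in H xs b c \<longrightarrow> a \<in> verts (path_edges xs)))"

definition biconnected :: "'a set set \<Rightarrow> bool" where
  "biconnected B \<longleftrightarrow> (\<exists>e. B = {e}) \<or>
     (connected_graph B \<and> (\<forall>a. \<not> articulation_vertex B a))"

definition biconnected_component :: "'a set set \<Rightarrow> 'a set set \<Rightarrow> bool" where
  "biconnected_component G B \<longleftrightarrow> B \<noteq> {} \<and> B \<subseteq> G \<and> biconnected B \<and>
     (\<forall>B'. B \<subseteq> B' \<and> B' \<subseteq> G \<and> biconnected B' \<longrightarrow> B' = B)"

definition condition1 :: "'v set \<Rightarrow> ('v \<Rightarrow> 'a set) \<Rightarrow> bool" where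
  "condition1 V Av \<longleftrightarrow>
     (\<forall>C. is_cycle_in (G_all V Av) C \<longrightarrow> (\<exists>v\<in>V. verts C \<subseteq> Av v))"

end

theory Submission
  imports Defs
begin

(* A cycle is biconnected, so it lies in a biconnected component; hence an individual
   evaluating a component evaluates every cycle inside it.
   Conversely, let B be a biconnected component other than a single edge, and let K be a set of
   at least two vertices of B evaluated by one individual. If K is not all of A(B), some edge
   k1 y of B leaves K. As k1 is no articulation vertex, a path of B from y back to K avoids k1,
   and closing it up through the alternatives of K gives a cycle through K and y. Condition 1
   then provides an individual evaluating K and y, and growing K from a single edge in this way
   exhausts A(B). *)

lemma path_edges_Nil [simp]: "path_edges [] = {}"
  by (simp add: path_edges_def)

lemma path_edges_singleton [simp]: "path_edges [x] = {}"
  by (simp add: path_edges_def)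

lemma path_edges_Cons_Cons [simp]:
  "path_edges (x # y # zs) = insert {x, y} (path_edges (y # zs))"
  by (auto simp add: path_edges_def)

lemma path_edges_append:
  "path_edges (xs @ ys) = path_edges xs \<union> path_edges ys \<union>
     (if xs = [] \<or> ys = [] then {} else {{last xs, hd ys}})"
proof (induction xs rule: induct_list012)
  case (3 x y zs)
  then show ?case by auto
qed (cases ys; auto)+

lemma path_edges_rev [simp]: "path_edges (rev xs) = path_edges xs"
  by (induction xs rule: induct_list012) (auto simp: path_edges_append insert_commute)

lemma path_edges_subset_append:
  "path_edges xs \<subseteq> path_edges (xs @ ys)" "path_edges ys \<subseteq> path_edges (xs @ ys)"
  by (auto simp: path_edges_append)

lemma path_edges_memE:
  assumes "e \<in> path_edges xs" "distinct xs"
  obtains x y where "e = {x, y}" "x \<in> set xs" "y \<in> set xs" "x \<noteq> y"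
  using assms by (induction xs rule: induct_list012) auto

lemma verts_path_edges_subset: "verts (path_edges xs) \<subseteq> set xs"
  by (induction xs rule: induct_list012) (auto simp: verts_def)

lemma verts_path_edges:
  assumes "length xs \<ge> 2"
  shows "verts (path_edges xs) = set xs"
  using assms
proof (induction xs rule: induct_list012)
  case (3 x y zs)
  then show ?case by (cases zs) (auto simp: verts_def)
qed auto

lemma path_list_in_mono: "path_list_in H xs b c \<Longrightarrow> H \<subseteq> H' \<Longrightarrow> path_list_in H' xs b c"
  by (auto simp: path_list_in_def)

lemma path_list_in_Cons_Cons:
  "path_list_in H (x # y # zs) b c \<longleftrightarrow>
     x = b \<and> {b, y} \<in> H \<and> b \<notin> set (y # zs) \<and> path_list_in H (y # zs) y c"
  by (auto simp: path_list_in_def)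

definition cycle_edges :: "'a list \<Rightarrow> 'a set set" where
  "cycle_edges xs = path_edges (xs @ [hd xs])"

lemma is_cycle_in_iff:
  "is_cycle_in H C \<longleftrightarrow> (\<exists>xs. distinct xs \<and> length xs \<ge> 3 \<and> C = cycle_edges xs \<and> C \<subseteq> H)"
  by (simp add: is_cycle_in_def cycle_edges_def)

lemma path_edges_subset_cycle_edges: "path_edges xs \<subseteq> cycle_edges xs"
  by (simp add: cycle_edges_def path_edges_subset_append)

lemma verts_cycle_edges: "length xs \<ge> 2 \<Longrightarrow> verts (cycle_edges xs) = set xs"
  by (cases xs) (auto simp: cycle_edges_def verts_path_edges)

lemma cycle_edges_append:
  assumes "xs \<noteq> []" "ys \<noteq> []"
  shows "cycle_edges (xs @ ys) = path_edges (xs @ [hd ys]) \<union> path_edges (ys @ [hd xs])"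
  using assms by (auto simp: cycle_edges_def path_edges_append)

lemma cycle_edges_rotate: "cycle_edges (xs @ ys) = cycle_edges (ys @ xs)"
  by (cases "xs = [] \<or> ys = []") (auto simp: cycle_edges_append)

lemma path_in_path_edges:
  assumes "distinct xs" "b \<in> set xs" "c \<in> set xs"
  shows "\<exists>ys. path_list_in (path_edges xs) ys b c \<and> set ys \<subseteq> set xs"
proof -
  have forward: "\<exists>ys. path_list_in (path_edges xs) ys b c \<and> set ys \<subseteq> set xs"
    if "distinct xs" "xs = p @ b # q" "c \<in> set (b # q)" for xs p q
  proof -
    obtain r s where rs: "b # q = r @ c # s" using split_list[OF \<open>c \<in> set (b # q)\<close>] by blast
    have "path_edges (r @ [c]) \<subseteq> path_edges ((r @ [c]) @ s)"
      by (rule path_edges_subset_append)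
    also have "\<dots> \<subseteq> path_edges (p @ (r @ [c]) @ s)"
      by (rule path_edges_subset_append)
    finally have "path_edges (r @ [c]) \<subseteq> path_edges xs"
      using rs \<open>xs = p @ b # q\<close> by simp
    moreover have "hd (r @ [c]) = b" using rs by (cases r) auto
    ultimately show ?thesis
      using that rs by (intro exI[of _ "r @ [c]"]) (auto simp: path_list_in_def)
  qed
  obtain p q where xs: "xs = p @ b # q" using split_list[OF assms(2)] by blast
  show ?thesis
  proof (cases "c \<in> set (b # q)")
    case True
    then show ?thesis using forward[OF assms(1) xs] by blast
  next
    case False
    then have "c \<in> set (b # rev p)" using assms(3) xs by auto
    moreover have "distinct (rev xs)" "rev xs = rev q @ b # rev p" using xs assms(1) by auto
    ultimately obtain ys
      where "path_list_in (path_edges (rev xs)) ys b c" "set ys \<subseteq> set (rev xs)"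
      using forward by blast
    then show ?thesis by auto
  qed
qed

lemma path_in_cycle_minus_vertex:
  assumes "distinct xs" "a \<in> set xs" "b \<in> set xs - {a}" "c \<in> set xs - {a}"
  shows "\<exists>ys. path_list_in (cycle_edges xs) ys b c \<and> a \<notin> set ys"
proof -
  obtain p q where xs: "xs = p @ a # q" using split_list[OF assms(2)] by blast
  have "path_edges (q @ p) \<subseteq> path_edges ([a] @ q @ p)"
    by (rule path_edges_subset_append)
  also have "\<dots> \<subseteq> cycle_edges (a # q @ p)"
    using path_edges_subset_cycle_edges by simp
  also have "\<dots> = cycle_edges xs" using cycle_edges_rotate[of p "a # q"] xs by simp
  finally have sub: "path_edges (q @ p) \<subseteq> cycle_edges xs" .
  have "distinct (q @ p)" "set (q @ p) = set xs - {a}" using assms(1) xs by auto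
  then obtain ys where "path_list_in (path_edges (q @ p)) ys b c" "set ys \<subseteq> set xs - {a}"
    using path_in_path_edges[of "q @ p" b c] assms(3,4) by auto
  then show ?thesis using path_list_in_mono[OF _ sub] by blast
qed

lemma biconnected_cycle_edges:
  assumes "distinct xs" "length xs \<ge> 3"
  shows "biconnected (cycle_edges xs)"
proof -
  have verts: "verts (cycle_edges xs) = set xs" using assms(2) by (simp add: verts_cycle_edges)
  have "connected_graph (cycle_edges xs)"
    unfolding connected_graph_def verts
  proof (intro conjI ballI)
    show "cycle_edges xs \<noteq> {}" using verts assms(2) by (auto simp: verts_def)
    fix b c assume "b \<in> set xs" "c \<in> set xs"
    then show "\<exists>ys. path_list_in (cycle_edges xs) ys b c"
      using path_in_path_edges[OF assms(1)] path_list_in_mono[OF _ path_edges_subset_cycle_edges]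
      by meson
  qed
  moreover have "\<not> articulation_vertex (cycle_edges xs) a" for a
  proof
    assume "articulation_vertex (cycle_edges xs) a"
    then obtain b c where abc: "a \<in> set xs" "b \<in> set xs - {a}" "c \<in> set xs - {a}"
      and separates: "\<And>ys. path_list_in (cycle_edges xs) ys b c \<Longrightarrow> a \<in> verts (path_edges ys)"
      unfolding articulation_vertex_def verts by blast
    obtain ys where ys: "path_list_in (cycle_edges xs) ys b c" "a \<notin> set ys"
      using path_in_cycle_minus_vertex[OF assms(1) abc] by blast
    show False using separates[OF ys(1)] ys(2) verts_path_edges_subset[of ys] by blast
  qed
  ultimately show ?thesis by (simp add: biconnected_def)
qed

lemma path_crossing_edge:
  assumes "path_list_in H xs b c" "b \<in> K" "c \<notin> K"
  shows "\<exists>u w. {u, w} \<in> H \<and> u \<in> K \<and> w \<notin> K"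
  using assms
proof (induction xs arbitrary: b rule: induct_list012)
  case (3 x y zs)
  then have "{b, y} \<in> H" "path_list_in H (y # zs) y c"
    by (simp_all add: path_list_in_Cons_Cons)
  then show ?case using "3.IH"(2) \<open>b \<in> K\<close> \<open>c \<notin> K\<close> by (cases "y \<in> K") blast+
qed (simp_all add: path_list_in_def)

lemma path_avoiding_non_articulation_vertex:
  assumes "\<not> articulation_vertex H a" "a \<in> verts H"
    and "b \<in> verts H - {a}" "c \<in> verts H - {a}" "b \<noteq> c"
  shows "\<exists>xs. path_list_in H xs b c \<and> a \<notin> set xs"
proof -
  obtain xs where xs: "path_list_in H xs b c" "a \<notin> verts (path_edges xs)"
    using assms unfolding articulation_vertex_def by blast
  then have "length xs \<ge> 2"
    using \<open>b \<noteq> c\<close> by (cases xs rule: remdups_adj.cases) (auto simp: path_list_in_def)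
  then show ?thesis using xs verts_path_edges by metis
qed

lemma path_first_entry:
  assumes "path_list_in H xs b c" "c \<in> K"
  shows "\<exists>ys z. path_list_in H (ys @ [z]) b z \<and> z \<in> K \<and> set ys \<inter> K = {} \<and>
    set (ys @ [z]) \<subseteq> set xs"
proof -
  have "c \<in> set xs" using assms(1) last_in_set unfolding path_list_in_def by metis
  then obtain ys z zs where xs: "xs = ys @ z # zs" "z \<in> K" "\<forall>y\<in>set ys. y \<notin> K"
    using split_list_first_prop[of xs "\<lambda>y. y \<in> K"] assms(2) by blast
  have "path_edges (ys @ [z]) \<subseteq> path_edges ((ys @ [z]) @ zs)"
    by (rule path_edges_subset_append)
  moreover have "hd (ys @ [z]) = b"
    using assms(1) xs(1) by (cases ys) (auto simp: path_list_in_def)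
  ultimately have "path_list_in H (ys @ [z]) b z"
    using assms(1) xs(1) by (auto simp: path_list_in_def)
  then show ?thesis using xs by auto
qed

lemma G_all_memE:
  assumes "e \<in> G_all V Av"
  obtains a b v where "e = {a, b}" "a \<noteq> b" "v \<in> V" "a \<in> Av v" "b \<in> Av v"
  using assms unfolding G_all_def by blast

lemma path_edges_subset_G_all:
  assumes "distinct xs" "v \<in> V" "set xs \<subseteq> Av v"
  shows "path_edges xs \<subseteq> G_all V Av"
proof
  fix e assume "e \<in> path_edges xs"
  then obtain x y where "e = {x, y}" "x \<in> set xs" "y \<in> set xs" "x \<noteq> y"
    using assms(1) by (rule path_edges_memE)
  then show "e \<in> G_all V Av" using assms(2,3) unfolding G_all_def by blast
qed

lemma finite_G_all:
  assumes "finite A" "\<And>v. v \<in> V \<Longrightarrow> Av v \<subseteq> A"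
  shows "finite (G_all V Av)"
proof (rule finite_subset)
  show "G_all V Av \<subseteq> Pow A" using assms(2) unfolding G_all_def by blast
qed (use assms(1) in simp)

lemma verts_G_all_subset:
  assumes "\<And>v. v \<in> V \<Longrightarrow> Av v \<subseteq> A"
  shows "verts (G_all V Av) \<subseteq> A"
  using assms by (auto simp: verts_def elim!: G_all_memE)

lemma ex_biconnected_component_superset:
  assumes "finite G" "H \<subseteq> G" "H \<noteq> {}" "biconnected H"
  shows "\<exists>B. biconnected_component G B \<and> H \<subseteq> B"
proof -
  let ?S = "{B. H \<subseteq> B \<and> B \<subseteq> G \<and> biconnected B}"
  have "?S \<subseteq> Pow G" by blast
  then have "finite ?S" using assms(1) finite_subset by blast
  moreover have "H \<in> ?S" using assms(2,4) by blast
  ultimately obtain B where B: "B \<in> ?S" "\<And>B'. B' \<in> ?S \<Longrightarrow> B \<subseteq> B' \<Longrightarrow> B = B'"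
    using finite_has_maximal2[of ?S H] by (metis (no_types, lifting))
  have "biconnected_component G B"
    unfolding biconnected_component_def
  proof (intro conjI allI impI)
    show "B \<noteq> {}" "B \<subseteq> G" "biconnected B" using B(1) assms(3) by blast+
    fix B' assume B': "B \<subseteq> B' \<and> B' \<subseteq> G \<and> biconnected B'"
    then have "B' \<in> ?S" using B(1) by blast
    then show "B' = B" using B(2) B' by blast
  qed
  then show ?thesis using B(1) by blast
qed

lemma condition1_covers_closed_path:
  assumes "condition1 V Av" "v \<in> V"
    and "distinct (xs @ ys)" "length (xs @ ys) \<ge> 3" "xs \<noteq> []" "ys \<noteq> []"
    and "path_edges (xs @ [hd ys]) \<subseteq> G_all V Av" "set (ys @ [hd xs]) \<subseteq> Av v"
  shows "\<exists>v'\<in>V. set (xs @ ys) \<subseteq> Av v'"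
proof -
  have "distinct (ys @ [hd xs])" using assms(3,5) by (cases xs) auto
  then have "path_edges (ys @ [hd xs]) \<subseteq> G_all V Av"
    using assms(2,8) by (rule path_edges_subset_G_all)
  then have "cycle_edges (xs @ ys) \<subseteq> G_all V Av"
    using assms(5-7) by (simp add: cycle_edges_append)
  then have "is_cycle_in (G_all V Av) (cycle_edges (xs @ ys))"
    unfolding is_cycle_in_iff using assms(3,4) by (intro exI[of _ "xs @ ys"]) simp
  then obtain v' where "v' \<in> V" "verts (cycle_edges (xs @ ys)) \<subseteq> Av v'"
    using assms(1) unfolding condition1_def by blast
  moreover have "verts (cycle_edges (xs @ ys)) = set (xs @ ys)"
    using assms(4) by (simp add: verts_cycle_edges)
  ultimately show ?thesis by auto
qed

lemma condition1_extend_covered_set: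
  assumes c1: "condition1 V Av" and B: "B \<subseteq> G_all V Av" "connected_graph B"
    "\<forall>a. \<not> articulation_vertex B a"
    and K: "K \<subseteq> verts B" "finite K" "card K \<ge> 2" and v: "v \<in> V" "K \<subseteq> Av v"
    and x: "x \<in> verts B - K"
  shows "\<exists>y v'. y \<in> verts B - K \<and> v' \<in> V \<and> insert y K \<subseteq> Av v'"
proof -
  have K_nontrivial: "\<not> card K \<le> Suc 0" using K(3) by simp
  then obtain k where k: "k \<in> K" by fastforce
  obtain ps where "path_list_in B ps k x"
    using B(2) K(1) k(1) x unfolding connected_graph_def by blast
  then obtain k1 y where ky: "{k1, y} \<in> B" "k1 \<in> K" "y \<notin> K"
    using path_crossing_edge k x by (metis DiffD2)
  then have y: "y \<in> verts B - K" and k1: "k1 \<in> verts B" by (auto simp: verts_def)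
  obtain k2 where k2: "k2 \<in> K" "k2 \<noteq> k1"
    using K_nontrivial card_le_Suc0_iff_eq[OF K(2)] ky(2) by blast
  have "y \<in> verts B - {k1}" "k2 \<in> verts B - {k1}" "y \<noteq> k2"
    using y ky k2 K(1) by auto
  then obtain qs where qs: "path_list_in B qs y k2" "k1 \<notin> set qs"
    using path_avoiding_non_articulation_vertex[OF B(3)[rule_format] k1] by metis
  obtain ms z where ms: "path_list_in B (ms @ [z]) y z" "z \<in> K" "set ms \<inter> K = {}"
    "set (ms @ [z]) \<subseteq> set qs"
    using path_first_entry[OF qs(1) k2(1)] by auto
  have "y \<noteq> z" using y ms(2) by blast
  then obtain ms' where ms': "ms = y # ms'"
    using ms(1) by (cases ms) (auto simp: path_list_in_def)
  \<comment> \<open>The cycle runs from k1 along B through y to z, and returns to k1 through the rest of K.\<close>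
  obtain R where R: "distinct R" "set R = K - {k1, z}"
    using finite_distinct_list[of "K - {k1, z}"] K(2) by blast
  have "k1 \<notin> set ms" "k1 \<noteq> z" using qs(2) ms(4) by auto
  moreover have "distinct (ms @ [z])" using ms(1) by (simp add: path_list_in_def)
  ultimately have "distinct ((k1 # ms) @ (z # R))" using ms(2,3) R by auto
  moreover have "length ((k1 # ms) @ (z # R)) \<ge> 3" using ms' by simp
  moreover have "path_edges ((k1 # ms) @ [hd (z # R)]) \<subseteq> G_all V Av"
    using ky(1) ms(1) ms' B(1) by (auto simp: path_list_in_def)
  moreover have "set ((z # R) @ [hd (k1 # ms)]) \<subseteq> Av v" using R ms(2) ky(2) v(2) by auto
  ultimately obtain v' where "v' \<in> V" "set ((k1 # ms) @ (z # R)) \<subseteq> Av v'"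
    using condition1_covers_closed_path[OF c1 v(1)] by blast
  moreover have "insert y K \<subseteq> set ((k1 # ms) @ (z # R))" using R ms' by auto
  ultimately show ?thesis using y by blast
qed

lemma condition1_biconnected_covered:
  assumes c1: "condition1 V Av"
    and B: "B \<subseteq> G_all V Av" "finite (verts B)" "connected_graph B"
    "\<forall>a. \<not> articulation_vertex B a"
  shows "\<exists>v\<in>V. verts B \<subseteq> Av v"
proof -
  have grow: "\<exists>v\<in>V. verts B \<subseteq> Av v"
    if "K \<subseteq> verts B" "card K \<ge> 2" "v \<in> V" "K \<subseteq> Av v" for K v
    using that
  proof (induction "card (verts B - K)" arbitrary: K v rule: less_induct)
    case less
    show ?case
    proof (cases "K = verts B")
      case True
      then show ?thesis using less.prems by blast
    next
      case False
      then obtain x where "x \<in> verts B - K" using less.prems(1) by blast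
      moreover have "finite K" using less.prems(1) B(2) finite_subset by blast
      ultimately obtain y v' where y: "y \<in> verts B - K" "v' \<in> V" "insert y K \<subseteq> Av v'"
        using condition1_extend_covered_set[OF c1 B(1,3,4) less.prems(1) _ less.prems(2-4)]
        by blast
      have "verts B - insert y K \<subset> verts B - K" using y(1) by blast
      then have "card (verts B - insert y K) < card (verts B - K)"
        using B(2) by (simp add: psubset_card_mono)
      moreover have "card (insert y K) \<ge> 2"
        using less.prems(2) y(1) \<open>finite K\<close> by simp
      ultimately show ?thesis
        using less.hyps[of "insert y K" v'] less.prems(1) y by blast
    qed
  qed
  obtain e where "e \<in> B" using B(3) unfolding connected_graph_def by blast
  then obtain a b v where ab: "e = {a, b}" "a \<noteq> b" "v \<in> V" "a \<in> Av v" "b \<in> Av v"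
    using B(1) G_all_memE by blast
  have "{a, b} \<subseteq> verts B" using \<open>e \<in> B\<close> ab(1) by (auto simp: verts_def)
  then show ?thesis using grow[of "{a, b}" v] ab by simp
qed

lemma condition1_component_covered:
  assumes "condition1 V Av" "finite (verts (G_all V Av))"
    and B: "biconnected_component (G_all V Av) B"
  shows "\<exists>v\<in>V. verts B \<subseteq> Av v"
proof -
  have BG: "B \<subseteq> G_all V Av" and "biconnected B"
    using B unfolding biconnected_component_def by blast+
  then consider e where "B = {e}" | "connected_graph B" "\<forall>a. \<not> articulation_vertex B a"
    unfolding biconnected_def by blast
  then show ?thesis
  proof cases
    case 1
    then have "e \<in> G_all V Av" using BG by blast
    then obtain a b v where "e = {a, b}" "a \<noteq> b" "v \<in> V" "a \<in> Av v" "b \<in> Av v"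
      by (rule G_all_memE)
    then show ?thesis using 1 by (auto simp: verts_def)
  next
    case 2
    have "finite (verts B)"
      using assms(2) BG finite_subset unfolding verts_def by (metis Union_mono)
    then show ?thesis using condition1_biconnected_covered[OF assms(1) BG _ 2] by blast
  qed
qed

lemma condition1_if_components_covered:
  assumes "finite (G_all V Av)"
    and covered: "\<And>B. biconnected_component (G_all V Av) B \<Longrightarrow> \<exists>v\<in>V. verts B \<subseteq> Av v"
  shows "condition1 V Av"
  unfolding condition1_def
proof (intro allI impI)
  fix C assume "is_cycle_in (G_all V Av) C"
  then obtain xs
    where xs: "distinct xs" "length xs \<ge> 3" "C = cycle_edges xs" "C \<subseteq> G_all V Av"
    unfolding is_cycle_in_iff by metis
  then have "verts C = set xs" by (simp add: verts_cycle_edges)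
  then have "C \<noteq> {}" using xs(2) by (auto simp: verts_def)
  then obtain B where "biconnected_component (G_all V Av) B" "C \<subseteq> B"
    using ex_biconnected_component_superset[OF assms(1) xs(4)] biconnected_cycle_edges[OF xs(1,2)]
      xs(3) by blast
  then show "\<exists>v\<in>V. verts C \<subseteq> Av v"
    using covered unfolding verts_def by blast
qed

theorem proposition1:
  fixes A :: "'a set" and V :: "'v set" and Av :: "'v \<Rightarrow> 'a set"
  assumes "finite A" and "finite V" and "card A \<ge> 3" and "card V \<ge> 3"
    and "\<And>v. v \<in> V \<Longrightarrow> Av v \<subseteq> A \<and> card (Av v) \<ge> 2"
  shows "condition1 V Av \<longleftrightarrow>
    (\<forall>B. biconnected_component (G_all V Av) B \<longrightarrow>
         (\<exists>v\<in>V. verts B \<subseteq> Av v))"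
proof -
  \<comment> \<open>Only finiteness of A and the inclusions Av v \<subseteq> A are needed.\<close>
  have Av_subset: "\<And>v. v \<in> V \<Longrightarrow> Av v \<subseteq> A" using assms(5) by blast
  have "finite (G_all V Av)" using finite_G_all[OF assms(1) Av_subset] .
  moreover have "finite (verts (G_all V Av))"
    using verts_G_all_subset[OF Av_subset] assms(1) by (rule finite_subset)
  ultimately show ?thesis
    using condition1_component_covered condition1_if_components_covered by metis
qed

end
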